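(* Let $(\mathcal{M},\omega)$ be a symplectic manifold of dimension $2d$, $\pi:\mathcal{M}\to\mathcal{B}$ a fibration in compact connected Lagrangian tori, and $H=F\circ\pi$ with $F\in C^\infty(\mathcal{B})$ satisfying the Rüssmann condition. Then the set of points $b\in\mathcal{B}$ such that there is no nonzero $k\in E_b$ with $dF_b(k)=0$ (i.e. the set of tori $\pi^{-1}(b)$ on which the dynamics of the Hamiltonian vector field $X_H$ is ergodic) is dense in $\mathcal{B}$.
   Context: Near each point of $\mathcal{B}$ there are canonical action-angle coordinates $(x,\xi):\pi^{-1}(\mathcal{O})\to\mathbb{T}^d\times\mathbb{R}^d$, $\mathbb{T}^d=\mathbb{R}^d/\mathbb{Z}^d$. The Duistermaat connection $\nabla$ on $\mathcal{B}$ is the torsion-free flat connection for which the $d\xi_j$ are parallel. The resonance bundle $E\subset T\mathcal{B}$ is the lattice subbundle whose fiber $E_b$ is the $\mathbb{Z}$-span of $\partial/\partial\xi_1,\dots,\partial/\partial\xi_d$ at $b$ (dual to the lattice spanned by the $d\xi_j$); local sections of $E$ are parallel. On $\pi^{-1}(b)$, $X_H$ is the linear flow $\dot x_j=\partial F/\partial\xi_j(b)$, and a nonzero $k\in E_b$ with $dF_b(k)=\sum_jk_j\partial F/\partial\xi_j(b)=0$ is a resonance relation. Rüssmann condition: for every open $\mathcal{O}$ and every non-vanishing parallel vector field $X$ on $\mathcal{O}$, $dF(X)$ does not vanish identically on any nonempty open subset of $\mathcal{O}$. *)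

theory Defs
  imports "HOL-Analysis.Analysis"
begin

text \<open>The base B of the Lagrangian torus fibration is modelled by its integral affine
  structure (action coordinates): an atlas of charts xi : U -> R^d whose transition
  maps are locally integral affine.\<close>

definition int_lattice :: "'a::euclidean_space set" where
  "int_lattice = {x. \<forall>i\<in>Basis. x \<bullet> i \<in> \<int>}"

definition action_atlas :: "('b::topological_space set \<times> ('b \<Rightarrow> 'a::euclidean_space)) set \<Rightarrow> bool" where
  "action_atlas A \<longleftrightarrow>
     (\<forall>(U,\<phi>)\<in>A. open U \<and> open (\<phi> ` U) \<and> homeomorphism U (\<phi> ` U) \<phi> (inv_into U \<phi>)) \<and>
     (\<Union>(U,\<phi>)\<in>A. U) = UNIV \<and>
     (\<forall>(U,\<phi>)\<in>A. \<forall>(V,\<psi>)\<in>A. \<forall>b\<in>U \<inter> V.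
        \<exists>N L c. open N \<and> b \<in> N \<and> linear L \<and> bij L \<and> L ` int_lattice = int_lattice \<and>
          (\<forall>y\<in>N \<inter> U \<inter> V. \<psi> y = L (\<phi> y) + c))"

fun Ck_on :: "nat \<Rightarrow> 'a::euclidean_space set \<Rightarrow> ('a \<Rightarrow> real) \<Rightarrow> bool" where
  "Ck_on 0 S f \<longleftrightarrow> continuous_on S f"
| "Ck_on (Suc k) S f \<longleftrightarrow> f differentiable_on S \<and>
     (\<forall>v. Ck_on k S (\<lambda>x. frechet_derivative f (at x) v))"

definition smooth_on :: "'a::euclidean_space set \<Rightarrow> ('a \<Rightarrow> real) \<Rightarrow> bool" where
  "smooth_on S f \<longleftrightarrow> (\<forall>k. Ck_on k S f)"

definition smooth_fun :: "('b::topological_space set \<times> ('b \<Rightarrow> 'a::euclidean_space)) set \<Rightarrow> ('b \<Rightarrow> real) \<Rightarrow> bool" where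
  "smooth_fun A F \<longleftrightarrow> (\<forall>(U,\<phi>)\<in>A. smooth_on (\<phi> ` U) (F \<circ> inv_into U \<phi>))"

text \<open>dF_b(k) for k given by its action-coordinate components in the chart (U,phi).\<close>
definition dF :: "('b \<Rightarrow> real) \<Rightarrow> 'b set \<Rightarrow> ('b \<Rightarrow> 'a::euclidean_space) \<Rightarrow> 'b \<Rightarrow> 'a \<Rightarrow> real" where
  "dF F U \<phi> b v = frechet_derivative (F \<circ> inv_into U \<phi>) (at (\<phi> b)) v"

text \<open>b is non-resonant: no nonzero k in E_b (integer vector in action coordinates)
  with dF_b(k) = 0.\<close>
definition nonresonant :: "('b::topological_space set \<times> ('b \<Rightarrow> 'a::euclidean_space)) set \<Rightarrow> ('b \<Rightarrow> real) \<Rightarrow> 'b \<Rightarrow> bool" where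
  "nonresonant A F b \<longleftrightarrow>
     (\<forall>(U,\<phi>)\<in>A. b \<in> U \<longrightarrow> (\<forall>k\<in>int_lattice. k \<noteq> 0 \<longrightarrow> dF F U \<phi> b k \<noteq> 0))"

text \<open>A vector field on Ob is given by its coordinate representatives X (U,phi) b in each
  chart, compatible under chart changes; it is parallel (for the Duistermaat connection)
  iff the representatives are locally constant.\<close>
definition parallel_field ::
  "('b::topological_space set \<times> ('b \<Rightarrow> 'a::euclidean_space)) set \<Rightarrow> 'b set \<Rightarrow>
   ('b set \<times> ('b \<Rightarrow> 'a) \<Rightarrow> 'b \<Rightarrow> 'a) \<Rightarrow> bool" where
  "parallel_field A Ob X \<longleftrightarrow>
     (\<forall>(U,\<phi>)\<in>A. \<forall>(V,\<psi>)\<in>A. \<forall>b\<in>U \<inter> V \<inter> Ob.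
        X (V,\<psi>) b = frechet_derivative (\<psi> \<circ> inv_into U \<phi>) (at (\<phi> b)) (X (U,\<phi>) b)) \<and>
     (\<forall>(U,\<phi>)\<in>A. \<forall>b\<in>U \<inter> Ob. \<exists>N. open N \<and> b \<in> N \<and>
        (\<forall>y\<in>N \<inter> U \<inter> Ob. X (U,\<phi>) y = X (U,\<phi>) b))"

definition nonvanishing_field ::
  "('b::topological_space set \<times> ('b \<Rightarrow> 'a::euclidean_space)) set \<Rightarrow> 'b set \<Rightarrow>
   ('b set \<times> ('b \<Rightarrow> 'a) \<Rightarrow> 'b \<Rightarrow> 'a) \<Rightarrow> bool" where
  "nonvanishing_field A Ob X \<longleftrightarrow> (\<forall>(U,\<phi>)\<in>A. \<forall>b\<in>U \<inter> Ob. X (U,\<phi>) b \<noteq> 0)"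

definition russmann :: "('b::topological_space set \<times> ('b \<Rightarrow> 'a::euclidean_space)) set \<Rightarrow> ('b \<Rightarrow> real) \<Rightarrow> bool" where
  "russmann A F \<longleftrightarrow>
     (\<forall>Ob X. open Ob \<and> parallel_field A Ob X \<and> nonvanishing_field A Ob X \<longrightarrow>
        (\<forall>W. open W \<and> W \<noteq> {} \<and> W \<subseteq> Ob \<longrightarrow>
           \<not> (\<forall>(U,\<phi>)\<in>A. \<forall>b\<in>U \<inter> W. dF F U \<phi> b (X (U,\<phi>) b) = 0)))"

end

theory Submission
  imports Defs
begin

text \<open>In a chart (U, phi), a nonzero vector k, read in the other charts through the
  derivatives of the transition maps, is a non-vanishing parallel vector field, so by the
  Ruessmann condition the closed set of chart points z with dF_z(k) = 0 has empty interior.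
  The chart image is an open subset of R^d, hence a Baire space, and removing these nowhere
  dense sets for the countably many k in Z^d - {0} leaves a dense set.  Its points are
  non-resonant in every chart, because the derivatives of the transition maps preserve the
  lattice.\<close>

lemma action_atlas_chartD:
  assumes "action_atlas A" "(U,\<phi>) \<in> A"
  shows "open U" "open (\<phi> ` U)" "homeomorphism U (\<phi> ` U) \<phi> (inv_into U \<phi>)"
  using assms unfolding action_atlas_def by fastforce+

lemma action_atlas_covers:
  assumes "action_atlas A"
  obtains U \<phi> where "(U,\<phi>) \<in> A" "b \<in> U"
  using assms unfolding action_atlas_def by blast

lemma action_atlas_inv_into_chart:
  assumes "action_atlas A" "(U,\<phi>) \<in> A" "x \<in> U"
  shows "inv_into U \<phi> (\<phi> x) = x"
  using action_atlas_chartD(3)[OF assms(1,2)] assms(3) unfolding homeomorphism_def by auto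

lemma action_atlas_open_image:
  assumes "action_atlas A" "(U,\<phi>) \<in> A" "open S" "S \<subseteq> U"
  shows "open (\<phi> ` S)"
proof -
  have "openin (top_of_set U) S"
    using assms action_atlas_chartD(1)[OF assms(1,2)] by (simp add: openin_open_eq)
  then have "openin (top_of_set (\<phi> ` U)) (\<phi> ` S)"
    using homeomorphism_imp_open_map[OF action_atlas_chartD(3)[OF assms(1,2)]] by blast
  then show ?thesis
    using action_atlas_chartD(2)[OF assms(1,2)] openin_open_trans by blast
qed

lemma smooth_fun_chart_differentiable:
  assumes "action_atlas A" "smooth_fun A F" "(U,\<phi>) \<in> A" "z \<in> \<phi> ` U"
  shows "(F \<circ> inv_into U \<phi>) differentiable (at z)"
proof -
  have "Ck_on 1 (\<phi> ` U) (F \<circ> inv_into U \<phi>)"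
    using assms(2,3) unfolding smooth_fun_def smooth_on_def by blast
  then have "(F \<circ> inv_into U \<phi>) differentiable_on (\<phi> ` U)"
    by simp
  then show ?thesis
    using action_atlas_chartD(2)[OF assms(1,3)] assms(4) differentiable_on_eq_differentiable_at
    by blast
qed

lemma smooth_fun_chart_derivative_continuous:
  assumes "smooth_fun A F" "(U,\<phi>) \<in> A"
  shows "continuous_on (\<phi> ` U) (\<lambda>z. frechet_derivative (F \<circ> inv_into U \<phi>) (at z) k)"
proof -
  have "Ck_on 2 (\<phi> ` U) (F \<circ> inv_into U \<phi>)"
    using assms unfolding smooth_fun_def smooth_on_def by blast
  then show ?thesis
    by (simp add: numeral_2_eq_2 differentiable_imp_continuous_on)
qed

lemma transition_has_lattice_derivative:
  assumes "action_atlas A" "(U,\<phi>) \<in> A" "(V,\<psi>) \<in> A" "b \<in> U \<inter> V"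
  obtains N L where "open N" "b \<in> N" "linear L" "bij L" "L ` int_lattice = int_lattice"
    "\<And>y. y \<in> N \<inter> U \<inter> V \<Longrightarrow> ((\<psi> \<circ> inv_into U \<phi>) has_derivative L) (at (\<phi> y))"
proof -
  obtain N L c where N: "open N" "b \<in> N" "linear L" "bij L" "L ` int_lattice = int_lattice"
    and affine: "\<forall>y\<in>N \<inter> U \<inter> V. \<psi> y = L (\<phi> y) + c"
    using assms unfolding action_atlas_def by blast
  define G where "G = \<phi> ` (N \<inter> U \<inter> V)"
  have "open G"
    unfolding G_def using N(1) action_atlas_chartD(1)[OF assms(1)] assms(2,3)
    by (intro action_atlas_open_image[OF assms(1,2)]) auto
  have affine_on_G: "\<psi> (inv_into U \<phi> z) = L z + c" if "z \<in> G" for z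
    using that affine action_atlas_inv_into_chart[OF assms(1,2)] unfolding G_def by auto
  have affine_derivative: "((\<lambda>z. L z + c) has_derivative L) (at z)" for z
    using N(3) by (auto intro!: derivative_eq_intros linear_imp_has_derivative)
  have "((\<psi> \<circ> inv_into U \<phi>) has_derivative L) (at (\<phi> y))" if "y \<in> N \<inter> U \<inter> V" for y
  proof (rule has_derivative_transform_within_open[OF affine_derivative \<open>open G\<close>])
    show "\<phi> y \<in> G"
      using that unfolding G_def by blast
  qed (simp add: affine_on_G)
  with N show ?thesis
    by (rule that)
qed

lemma transition_differentiable:
  assumes "action_atlas A" "(U,\<phi>) \<in> A" "(V,\<psi>) \<in> A" "y \<in> U \<inter> V"
  shows "(\<psi> \<circ> inv_into U \<phi>) differentiable (at (\<phi> y))"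
proof (rule transition_has_lattice_derivative[OF assms])
  fix N L
  assume "open N" "y \<in> N" "linear L" "bij L" "L ` int_lattice = int_lattice"
    and D: "\<And>x. x \<in> N \<inter> U \<inter> V \<Longrightarrow> ((\<psi> \<circ> inv_into U \<phi>) has_derivative L) (at (\<phi> x))"
  show ?thesis
    using D \<open>y \<in> N\<close> assms(4) by (blast intro: differentiableI)
qed

lemma transition_derivative_lattice_automorphism:
  assumes "action_atlas A" "(U,\<phi>) \<in> A" "(V,\<psi>) \<in> A" "y \<in> U \<inter> V"
  shows "linear (frechet_derivative (\<psi> \<circ> inv_into U \<phi>) (at (\<phi> y))) \<and>
    bij (frechet_derivative (\<psi> \<circ> inv_into U \<phi>) (at (\<phi> y))) \<and>
    frechet_derivative (\<psi> \<circ> inv_into U \<phi>) (at (\<phi> y)) ` int_lattice = int_lattice"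
proof (rule transition_has_lattice_derivative[OF assms])
  fix N L
  assume "open N" "y \<in> N" "linear L" "bij L" "L ` int_lattice = int_lattice"
    and D: "\<And>x. x \<in> N \<inter> U \<inter> V \<Longrightarrow> ((\<psi> \<circ> inv_into U \<phi>) has_derivative L) (at (\<phi> x))"
  have "frechet_derivative (\<psi> \<circ> inv_into U \<phi>) (at (\<phi> y)) = L"
    using D \<open>y \<in> N\<close> assms(4) frechet_derivative_at by blast
  with \<open>linear L\<close> \<open>bij L\<close> \<open>L ` int_lattice = int_lattice\<close> show ?thesis
    by simp
qed

lemma frechet_derivative_change_chart:
  fixes f :: "'b::topological_space \<Rightarrow> 'c::real_normed_vector"
  assumes atlas: "action_atlas A" and U: "(U,\<phi>) \<in> A" and V: "(V,\<psi>) \<in> A" and y: "y \<in> U \<inter> V"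
    and f: "(f \<circ> inv_into V \<psi>) differentiable (at (\<psi> y))"
  shows "frechet_derivative (f \<circ> inv_into U \<phi>) (at (\<phi> y)) =
    frechet_derivative (f \<circ> inv_into V \<psi>) (at (\<psi> y)) \<circ> frechet_derivative (\<psi> \<circ> inv_into U \<phi>) (at (\<phi> y))"
proof -
  define G where "G = \<phi> ` (U \<inter> V)"
  have "open G"
    unfolding G_def using action_atlas_chartD(1)[OF atlas U] action_atlas_chartD(1)[OF atlas V]
    by (intro action_atlas_open_image[OF atlas U]) auto
  have "\<phi> y \<in> G"
    using y unfolding G_def by blast
  have "(\<psi> \<circ> inv_into U \<phi>) (\<phi> y) = \<psi> y"
    using action_atlas_inv_into_chart[OF atlas U] y by simp
  then have Df: "((f \<circ> inv_into V \<psi>) has_derivative frechet_derivative (f \<circ> inv_into V \<psi>) (at (\<psi> y)))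
      (at ((\<psi> \<circ> inv_into U \<phi>) (\<phi> y)))"
    using f by (simp add: frechet_derivative_works)
  have "((f \<circ> inv_into V \<psi>) \<circ> (\<psi> \<circ> inv_into U \<phi>) has_derivative
      frechet_derivative (f \<circ> inv_into V \<psi>) (at (\<psi> y)) \<circ> frechet_derivative (\<psi> \<circ> inv_into U \<phi>) (at (\<phi> y)))
      (at (\<phi> y))"
    using transition_differentiable[OF atlas U V y, unfolded frechet_derivative_works] Df
    by (rule diff_chain_at)
  then have "((f \<circ> inv_into U \<phi>) has_derivative
      frechet_derivative (f \<circ> inv_into V \<psi>) (at (\<psi> y)) \<circ> frechet_derivative (\<psi> \<circ> inv_into U \<phi>) (at (\<phi> y)))
      (at (\<phi> y))"
  proof (rule has_derivative_transform_within_open[OF _ \<open>open G\<close> \<open>\<phi> y \<in> G\<close>])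
    fix z assume "z \<in> G"
    then obtain w where "w \<in> U \<inter> V" "z = \<phi> w"
      unfolding G_def by blast
    then show "((f \<circ> inv_into V \<psi>) \<circ> (\<psi> \<circ> inv_into U \<phi>)) z = (f \<circ> inv_into U \<phi>) z"
      using action_atlas_inv_into_chart[OF atlas U] action_atlas_inv_into_chart[OF atlas V] by simp
  qed
  then show ?thesis
    by (rule frechet_derivative_at[symmetric])
qed

lemma dF_change_chart:
  assumes "action_atlas A" "smooth_fun A F" "(U,\<phi>) \<in> A" "(V,\<psi>) \<in> A" "y \<in> U \<inter> V"
  shows "dF F U \<phi> y v = dF F V \<psi> y (frechet_derivative (\<psi> \<circ> inv_into U \<phi>) (at (\<phi> y)) v)"
proof -
  have "(F \<circ> inv_into V \<psi>) differentiable (at (\<psi> y))"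
    using assms(5) by (intro smooth_fun_chart_differentiable[OF assms(1,2,4)]) blast
  then have "frechet_derivative (F \<circ> inv_into U \<phi>) (at (\<phi> y)) =
    frechet_derivative (F \<circ> inv_into V \<psi>) (at (\<psi> y)) \<circ> frechet_derivative (\<psi> \<circ> inv_into U \<phi>) (at (\<phi> y))"
    by (rule frechet_derivative_change_chart[OF assms(1,3,4,5)])
  then show ?thesis
    unfolding dF_def by simp
qed

definition chart_resonances :: "('b \<Rightarrow> real) \<Rightarrow> 'b set \<Rightarrow> ('b \<Rightarrow> 'a::euclidean_space) \<Rightarrow> 'a \<Rightarrow> 'a set" where
  "chart_resonances F U \<phi> k = {z \<in> \<phi> ` U. frechet_derivative (F \<circ> inv_into U \<phi>) (at z) k = 0}"

lemma closedin_chart_resonances: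
  assumes "smooth_fun A F" "(U,\<phi>) \<in> A"
  shows "closedin (top_of_set (\<phi> ` U)) (chart_resonances F U \<phi> k)"
  unfolding chart_resonances_def
  using continuous_closedin_preimage_constant[OF smooth_fun_chart_derivative_continuous[OF assms]]
  by simp

lemma nonresonant_iff_chart:
  assumes atlas: "action_atlas A" and smooth: "smooth_fun A F" and U: "(U,\<phi>) \<in> A" and b: "b \<in> U"
  shows "nonresonant A F b \<longleftrightarrow> (\<forall>k\<in>int_lattice - {0}. \<phi> b \<notin> chart_resonances F U \<phi> k)"
proof -
  have "nonresonant A F b \<longleftrightarrow> (\<forall>k\<in>int_lattice - {0}. dF F U \<phi> b k \<noteq> 0)"
  proof
    assume nonzero: "\<forall>k\<in>int_lattice - {0}. dF F U \<phi> b k \<noteq> 0"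
    show "nonresonant A F b"
      unfolding nonresonant_def
    proof (clarify)
      fix V \<psi> k
      assume V: "(V,\<psi>) \<in> A" "b \<in> V" and k: "k \<in> int_lattice" "k \<noteq> 0" and "dF F V \<psi> b k = 0"
      have bUV: "b \<in> U \<inter> V"
        using b V(2) by blast
      define D where "D = frechet_derivative (\<psi> \<circ> inv_into U \<phi>) (at (\<phi> b))"
      have "linear D" "D ` int_lattice = int_lattice"
        unfolding D_def using transition_derivative_lattice_automorphism[OF atlas U V(1) bUV] by auto
      then obtain m where "m \<in> int_lattice" "k = D m" "m \<noteq> 0"
        using k linear_0 by (metis imageE)
      moreover have "dF F U \<phi> b m = dF F V \<psi> b (D m)"
        unfolding D_def by (rule dF_change_chart[OF atlas smooth U V(1) bUV])
      ultimately show False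
        using nonzero \<open>dF F V \<psi> b k = 0\<close> by auto
    qed
  qed (use U b in \<open>auto simp: nonresonant_def\<close>)
  then show ?thesis
    using b unfolding chart_resonances_def dF_def by auto
qed

text \<open>The vector field which is the constant k in the chart (U0, phi0); it is parallel
  because the transition maps are locally affine.\<close>

definition coordinate_field ::
  "'b set \<Rightarrow> ('b \<Rightarrow> 'a::euclidean_space) \<Rightarrow> 'a \<Rightarrow> 'b set \<times> ('b \<Rightarrow> 'a) \<Rightarrow> 'b \<Rightarrow> 'a" where
  "coordinate_field U0 \<phi>0 k = (\<lambda>(U,\<phi>) b. frechet_derivative (\<phi> \<circ> inv_into U0 \<phi>0) (at (\<phi>0 b)) k)"

lemma coordinate_field_parallel:
  assumes atlas: "action_atlas A" and U0: "(U0,\<phi>0) \<in> A" and Ob: "Ob \<subseteq> U0"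
  shows "parallel_field A Ob (coordinate_field U0 \<phi>0 k)"
  unfolding parallel_field_def
proof (intro conjI; clarify)
  fix U \<phi> V \<psi> b
  assume U: "(U,\<phi>) \<in> A" and V: "(V,\<psi>) \<in> A" and b: "b \<in> U" "b \<in> V" "b \<in> Ob"
  have "(\<psi> \<circ> inv_into U \<phi>) differentiable (at (\<phi> b))"
    using b by (intro transition_differentiable[OF atlas U V]) blast
  then have "frechet_derivative (\<psi> \<circ> inv_into U0 \<phi>0) (at (\<phi>0 b)) =
      frechet_derivative (\<psi> \<circ> inv_into U \<phi>) (at (\<phi> b)) \<circ> frechet_derivative (\<phi> \<circ> inv_into U0 \<phi>0) (at (\<phi>0 b))"
    using b Ob by (intro frechet_derivative_change_chart[OF atlas U0 U]) auto
  then show "coordinate_field U0 \<phi>0 k (V,\<psi>) b =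
      frechet_derivative (\<psi> \<circ> inv_into U \<phi>) (at (\<phi> b)) (coordinate_field U0 \<phi>0 k (U,\<phi>) b)"
    unfolding coordinate_field_def by simp
next
  fix U \<phi> b
  assume U: "(U,\<phi>) \<in> A" and b: "b \<in> U" "b \<in> Ob"
  have bU0U: "b \<in> U0 \<inter> U"
    using b Ob by blast
  show "\<exists>N. open N \<and> b \<in> N \<and>
      (\<forall>y\<in>N \<inter> U \<inter> Ob. coordinate_field U0 \<phi>0 k (U,\<phi>) y = coordinate_field U0 \<phi>0 k (U,\<phi>) b)"
  proof (rule transition_has_lattice_derivative[OF atlas U0 U bU0U])
    fix N L
    assume "open N" "b \<in> N"
      and D: "\<And>y. y \<in> N \<inter> U0 \<inter> U \<Longrightarrow> ((\<phi> \<circ> inv_into U0 \<phi>0) has_derivative L) (at (\<phi>0 y))"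
    have "coordinate_field U0 \<phi>0 k (U,\<phi>) y = L k" if "y \<in> N \<inter> U \<inter> Ob" for y
      using D[of y] that Ob frechet_derivative_at unfolding coordinate_field_def by fastforce
    with \<open>open N\<close> \<open>b \<in> N\<close> b show ?thesis
      by (metis IntI)
  qed
qed

lemma coordinate_field_nonvanishing:
  assumes atlas: "action_atlas A" and U0: "(U0,\<phi>0) \<in> A" and Ob: "Ob \<subseteq> U0" and "k \<noteq> 0"
  shows "nonvanishing_field A Ob (coordinate_field U0 \<phi>0 k)"
  unfolding nonvanishing_field_def
proof (clarify)
  fix U \<phi> b
  assume U: "(U,\<phi>) \<in> A" and b: "b \<in> U" "b \<in> Ob" and zero: "coordinate_field U0 \<phi>0 k (U,\<phi>) b = 0"
  define D where "D = frechet_derivative (\<phi> \<circ> inv_into U0 \<phi>0) (at (\<phi>0 b))"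
  have "linear D" "inj D"
    unfolding D_def using transition_derivative_lattice_automorphism[OF atlas U0 U] b Ob
    by (auto simp: bij_def)
  moreover have "D k = 0"
    using zero unfolding D_def coordinate_field_def by simp
  ultimately show False
    using \<open>k \<noteq> 0\<close> by (metis injD linear_0)
qed

lemma russmann_interior_chart_resonances:
  assumes atlas: "action_atlas A" and smooth: "smooth_fun A F" and russ: "russmann A F"
    and U0: "(U0,\<phi>0) \<in> A" and "k \<noteq> 0"
  shows "interior (chart_resonances F U0 \<phi>0 k) = {}"
proof (rule ccontr)
  define B where "B = interior (chart_resonances F U0 \<phi>0 k)"
  define Ob where "Ob = U0 \<inter> \<phi>0 -` B"
  assume "interior (chart_resonances F U0 \<phi>0 k) \<noteq> {}"
  then obtain z where "z \<in> B"
    unfolding B_def by blast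
  have B_resonant: "B \<subseteq> chart_resonances F U0 \<phi>0 k"
    unfolding B_def by (rule interior_subset)
  then obtain x where "x \<in> U0" "z = \<phi>0 x"
    using \<open>z \<in> B\<close> unfolding chart_resonances_def by blast
  with \<open>z \<in> B\<close> have "Ob \<noteq> {}"
    unfolding Ob_def by auto
  have "continuous_on U0 \<phi>0"
    using action_atlas_chartD(3)[OF atlas U0] by (rule homeomorphism_cont1)
  then have "open Ob"
    unfolding Ob_def B_def using action_atlas_chartD(1)[OF atlas U0] open_interior
    by (rule continuous_open_preimage)
  have "Ob \<subseteq> U0"
    unfolding Ob_def by blast
  define X where "X = coordinate_field U0 \<phi>0 k"
  have "parallel_field A Ob X" "nonvanishing_field A Ob X"
    unfolding X_def using coordinate_field_parallel[OF atlas U0 \<open>Ob \<subseteq> U0\<close>]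
      coordinate_field_nonvanishing[OF atlas U0 \<open>Ob \<subseteq> U0\<close> \<open>k \<noteq> 0\<close>] by auto
  then have "\<not> (\<forall>(U,\<phi>)\<in>A. \<forall>b\<in>U \<inter> Ob. dF F U \<phi> b (X (U,\<phi>) b) = 0)"
    using russ \<open>open Ob\<close> \<open>Ob \<noteq> {}\<close> unfolding russmann_def by blast
  then obtain U \<phi> b where U: "(U,\<phi>) \<in> A" and b: "b \<in> U" "b \<in> Ob"
    and "dF F U \<phi> b (X (U,\<phi>) b) \<noteq> 0"
    by fast
  moreover have "dF F U0 \<phi>0 b k = dF F U \<phi> b (X (U,\<phi>) b)"
    using b \<open>Ob \<subseteq> U0\<close> unfolding X_def coordinate_field_def
    by (simp add: dF_change_chart[OF atlas smooth U0 U] subset_iff)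
  moreover have "\<phi>0 b \<in> chart_resonances F U0 \<phi>0 k"
    using b B_resonant unfolding Ob_def by blast
  ultimately show False
    unfolding chart_resonances_def dF_def by simp
qed

lemma countable_int_lattice: "countable (int_lattice :: 'a::euclidean_space set)"
proof -
  define coords where "coords = (\<lambda>x::'a. restrict (\<lambda>i. x \<bullet> i) Basis)"
  have "inj_on coords int_lattice"
  proof (rule inj_onI)
    fix x y
    assume "coords x = coords y"
    then have "x \<bullet> i = y \<bullet> i" if "i \<in> Basis" for i
      using that unfolding coords_def by (metis restrict_apply')
    then show "x = y"
      by (rule euclidean_eqI)
  qed
  moreover have "coords ` int_lattice \<subseteq> Pi\<^sub>E Basis (\<lambda>_. \<int>)"
    unfolding coords_def int_lattice_def by (auto simp: PiE_iff)
  moreover have "countable (Pi\<^sub>E Basis (\<lambda>_. \<int> :: real set))"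
    by (intro countable_PiE finite_Basis) (simp add: Ints_def)
  ultimately show ?thesis
    by (metis countable_image_inj_on countable_subset)
qed

lemma open_not_subset_countable_Union_nowhere_dense:
  fixes S :: "'a::complete_space set"
  assumes "open S" "countable K"
    and closed: "\<And>k. k \<in> K \<Longrightarrow> closedin (top_of_set S) (Z k)"
    and nowhere_dense: "\<And>k. k \<in> K \<Longrightarrow> interior (Z k) = {}"
    and "open W" "W \<noteq> {}" "W \<subseteq> S"
  shows "\<not> W \<subseteq> (\<Union>k\<in>K. Z k)"
proof
  have "openin euclidean S"
    using \<open>open S\<close> by (simp flip: open_openin)
  have "top_of_set S interior_of (\<Union>k\<in>K. Z k) = {}"
  proof (rule Baire_category_alt)
    have "completely_metrizable_space (top_of_set S)"
      using completely_metrizable_space_euclidean \<open>openin euclidean S\<close>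
      by (rule completely_metrizable_space_openin)
    then show "completely_metrizable_space (top_of_set S) \<or>
        locally_compact_space (top_of_set S) \<and> regular_space (top_of_set S)"
      by (rule disjI1)
    show "countable (Z ` K)"
      using \<open>countable K\<close> by (rule countable_image)
    fix T
    assume "T \<in> Z ` K"
    then obtain k where "k \<in> K" "T = Z k"
      by blast
    have "top_of_set S interior_of T = S \<inter> interior T"
      using interior_of_subtopology_open[OF \<open>openin euclidean S\<close>] by simp
    then show "closedin (top_of_set S) T \<and> top_of_set S interior_of T = {}"
      using closed[OF \<open>k \<in> K\<close>] nowhere_dense[OF \<open>k \<in> K\<close>] \<open>T = Z k\<close> by simp
  qed
  moreover assume "W \<subseteq> (\<Union>k\<in>K. Z k)"
  moreover have "openin (top_of_set S) W"
    using \<open>open W\<close> \<open>W \<subseteq> S\<close> by (simp add: openin_open_eq \<open>open S\<close>)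
  ultimately show False
    using \<open>W \<noteq> {}\<close> interior_of_maximal by blast
qed

lemma exists_nonresonant_in_chart:
  assumes atlas: "action_atlas A" and smooth: "smooth_fun A F" and russ: "russmann A F"
    and U: "(U,\<phi>) \<in> A" and "open W" "W \<inter> U \<noteq> {}"
  obtains w where "w \<in> W \<inter> U" "nonresonant A F w"
proof -
  have "open (\<phi> ` (W \<inter> U))"
    using \<open>open W\<close> action_atlas_chartD(1)[OF atlas U]
    by (intro action_atlas_open_image[OF atlas U]) auto
  moreover have "\<phi> ` (W \<inter> U) \<noteq> {}" "\<phi> ` (W \<inter> U) \<subseteq> \<phi> ` U"
    using \<open>W \<inter> U \<noteq> {}\<close> by auto
  ultimately have "\<not> \<phi> ` (W \<inter> U) \<subseteq> (\<Union>k\<in>int_lattice - {0}. chart_resonances F U \<phi> k)"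
    using action_atlas_chartD(2)[OF atlas U] countable_int_lattice
      closedin_chart_resonances[OF smooth U]
      russmann_interior_chart_resonances[OF atlas smooth russ U]
    by (intro open_not_subset_countable_Union_nowhere_dense) auto
  then obtain w where "w \<in> W \<inter> U" "\<forall>k\<in>int_lattice - {0}. \<phi> w \<notin> chart_resonances F U \<phi> k"
    by blast
  with nonresonant_iff_chart[OF atlas smooth U] show ?thesis
    using that by blast
qed

theorem mainTheorem11:
  fixes A :: "('b::topological_space set \<times> ('b \<Rightarrow> 'a::euclidean_space)) set"
    and F :: "'b \<Rightarrow> real"
  assumes "action_atlas A"
    and "smooth_fun A F"
    and "russmann A F"
  shows "closure {b. nonresonant A F b} = UNIV"
proof -
  have "{b. nonresonant A F b} \<inter> W \<noteq> {}" if "open W" "W \<noteq> {}" for W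
  proof -
    obtain b0 where "b0 \<in> W"
      using \<open>W \<noteq> {}\<close> by blast
    obtain U \<phi> where "(U,\<phi>) \<in> A" "b0 \<in> U"
      using assms(1) by (rule action_atlas_covers)
    then obtain w where "w \<in> W \<inter> U" "nonresonant A F w"
      using exists_nonresonant_in_chart[OF assms _ \<open>open W\<close>] \<open>b0 \<in> W\<close> by blast
    then show ?thesis
      by blast
  qed
  then have "euclidean closure_of {b. nonresonant A F b} = topspace euclidean"
    unfolding dense_intersects_open by (simp flip: open_openin)
  then show ?thesis
    by simp
qed

end
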